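(* Prioritized planning with any given priority ordering is incomplete for the class of P-solvable MAPF instances: for every integer $M\ge 2$ and every strict partial order $\prec$ on $\{1,\dots,M\}$, there exists a P-solvable MAPF instance with agents $a_1,\dots,a_M$ such that prioritized planning with $\prec$ does not result in a solution.
   Context: A MAPF instance consists of a connected undirected graph $G=(V,E)$ and $M$ agents $a_1,\dots,a_M$; agent $a_i$ has a start vertex $s_i$ and a target vertex $t_i$, and start vertices are pairwise distinct, as are target vertices. Time is discrete; at each time step every agent either moves to an adjacent vertex or waits. A path for $a_i$ is a sequence $\pi_i=\langle \pi_i(0),\pi_i(1),\dots\rangle$ with $\pi_i(0)=s_i$, consecutive vertices equal or adjacent, and $\pi_i(t)=t_i$ for all $t\ge T_i$, where the arrival time $T_i$ is the least such time. Two agents collide if they occupy the same vertex at the same time, or traverse the same edge in opposite directions at the same time step. A solution is a collision-free set of paths, one per agent. A priority ordering is a strict partial order $\prec$ on $\{1,\dots,M\}$ ($a_i$ has higher priority than $a_j$ iff $i\prec j$). A solution $\{\pi_i\}$ is consistent with $\prec$ if higher priority agents never wait for lower priority agents, i.e. for every $i$ the arrival time $T_i$ of $\pi_i$ equals the minimum arrival time over all paths for $a_i$ that do not collide with any $\pi_k$ with $k\prec i$. A MAPF instance is P-solvable iff it has a solution consistent with some priority ordering. Prioritized planning with $\prec$: agents are processed in an order compatible with $\prec$; each agent $a_j$ is assigned a path of minimum arrival time among paths that do not collide with the already computed paths of all $a_k$ with $k\prec j$ (ties broken arbitrarily); it fails if some agent has no such path, and otherwise results in a solution iff the resulting plan is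 collision-free. *)

theory Defs
  imports Main
begin

text \<open>A MAPF instance: vertices (natural numbers), undirected edges (stored symmetrically),
start and target vertex of each agent. Agents are numbered 1..M.\<close>

record mapf =
  verts  :: "nat set"
  edges  :: "(nat \<times> nat) set"
  start  :: "nat \<Rightarrow> nat"
  target :: "nat \<Rightarrow> nat"

definition connected_graph :: "nat set \<Rightarrow> (nat \<times> nat) set \<Rightarrow> bool" where
  "connected_graph V E \<longleftrightarrow> V \<noteq> {} \<and> finite V \<and> E \<subseteq> V \<times> V \<and> sym E \<and> irrefl E
     \<and> (\<forall>u\<in>V. \<forall>v\<in>V. (u, v) \<in> E\<^sup>*)"

definition valid_instance :: "mapf \<Rightarrow> nat \<Rightarrow> bool" where
  "valid_instance I M \<longleftrightarrow> connected_graph (verts I) (edges I)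
     \<and> (\<forall>i\<in>{1..M}. start I i \<in> verts I \<and> target I i \<in> verts I)
     \<and> inj_on (start I) {1..M} \<and> inj_on (target I) {1..M}"

definition is_path :: "mapf \<Rightarrow> nat \<Rightarrow> (nat \<Rightarrow> nat) \<Rightarrow> bool" where
  "is_path I i p \<longleftrightarrow> p 0 = start I i \<and> (\<forall>t. p t \<in> verts I)
     \<and> (\<forall>t. p (Suc t) = p t \<or> (p t, p (Suc t)) \<in> edges I)
     \<and> (\<exists>T. \<forall>t\<ge>T. p t = target I i)"

definition arrival :: "mapf \<Rightarrow> nat \<Rightarrow> (nat \<Rightarrow> nat) \<Rightarrow> nat" where
  "arrival I i p = (LEAST T. \<forall>t\<ge>T. p t = target I i)"

definition collide :: "(nat \<Rightarrow> nat) \<Rightarrow> (nat \<Rightarrow> nat) \<Rightarrow> bool" where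
  "collide p q \<longleftrightarrow> (\<exists>t. p t = q t
      \<or> (p t \<noteq> p (Suc t) \<and> p t = q (Suc t) \<and> p (Suc t) = q t))"

definition is_solution :: "mapf \<Rightarrow> nat \<Rightarrow> (nat \<Rightarrow> nat \<Rightarrow> nat) \<Rightarrow> bool" where
  "is_solution I M \<Pi> \<longleftrightarrow> (\<forall>i\<in>{1..M}. is_path I i (\<Pi> i))
     \<and> (\<forall>i\<in>{1..M}. \<forall>j\<in>{1..M}. i \<noteq> j \<longrightarrow> \<not> collide (\<Pi> i) (\<Pi> j))"

text \<open>Strict partial order on {1..M}; (k, i) \<in> P means k \<prec> i (k has higher priority).\<close>
definition strict_po_on :: "nat \<Rightarrow> (nat \<times> nat) set \<Rightarrow> bool" where
  "strict_po_on M P \<longleftrightarrow> P \<subseteq> {1..M} \<times> {1..M} \<and> irrefl P \<and> trans P"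

definition avoids :: "mapf \<Rightarrow> (nat \<times> nat) set \<Rightarrow> (nat \<Rightarrow> nat \<Rightarrow> nat) \<Rightarrow> nat
    \<Rightarrow> (nat \<Rightarrow> nat) \<Rightarrow> bool" where
  "avoids I P \<Pi> i p \<longleftrightarrow> is_path I i p \<and> (\<forall>k. (k, i) \<in> P \<longrightarrow> \<not> collide p (\<Pi> k))"

definition min_arrival :: "mapf \<Rightarrow> (nat \<times> nat) set \<Rightarrow> (nat \<Rightarrow> nat \<Rightarrow> nat) \<Rightarrow> nat \<Rightarrow> nat" where
  "min_arrival I P \<Pi> i = (LEAST T. \<exists>p. avoids I P \<Pi> i p \<and> arrival I i p = T)"

definition consistent :: "mapf \<Rightarrow> nat \<Rightarrow> (nat \<times> nat) set \<Rightarrow> (nat \<Rightarrow> nat \<Rightarrow> nat) \<Rightarrow> bool" where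
  "consistent I M P \<Pi> \<longleftrightarrow> (\<forall>i\<in>{1..M}. arrival I i (\<Pi> i) = min_arrival I P \<Pi> i)"

definition P_solvable :: "mapf \<Rightarrow> nat \<Rightarrow> bool" where
  "P_solvable I M \<longleftrightarrow> (\<exists>P \<Pi>. strict_po_on M P \<and> is_solution I M \<Pi> \<and> consistent I M P \<Pi>)"

definition compatible_order :: "nat \<Rightarrow> (nat \<times> nat) set \<Rightarrow> nat list \<Rightarrow> bool" where
  "compatible_order M P \<sigma> \<longleftrightarrow> distinct \<sigma> \<and> set \<sigma> = {1..M}
     \<and> (\<forall>a<length \<sigma>. \<forall>b<length \<sigma>. (\<sigma> ! b, \<sigma> ! a) \<in> P \<longrightarrow> b < a)"

definition pp_step :: "mapf \<Rightarrow> (nat \<times> nat) set \<Rightarrow> (nat \<Rightarrow> nat \<Rightarrow> nat) \<Rightarrow> nat \<Rightarrow> bool" where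
  "pp_step I P \<Pi> j \<longleftrightarrow> avoids I P \<Pi> j (\<Pi> j)
     \<and> (\<forall>p. avoids I P \<Pi> j p \<longrightarrow> arrival I j (\<Pi> j) \<le> arrival I j p)"

text \<open>Some run of prioritized planning with P (some compatible order, some tie-breaking,
no failure) produces a collision-free plan.\<close>
definition pp_results_in_solution :: "mapf \<Rightarrow> nat \<Rightarrow> (nat \<times> nat) set \<Rightarrow> bool" where
  "pp_results_in_solution I M P \<longleftrightarrow> (\<exists>\<sigma> \<Pi>. compatible_order M P \<sigma>
     \<and> (\<forall>j\<in>{1..M}. pp_step I P \<Pi> j) \<and> is_solution I M \<Pi>)"

end

theory Submission
  imports Defs
begin

text \<open>Take a star with centre 1 and two distinguished agents a, b: a must travel from one leaf
to another, hence through the centre, while b starts and ends at the centre; every other agent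
starts on its own leaf, which is also its target. Waiting at the target has arrival time 0, so
prioritized planning parks b at the centre unless b has to avoid a, i.e. unless a \<prec> b; then a
can never pass. With the priority a \<prec> b alone the instance is solved consistently: b steps
aside to a free leaf while a crosses the centre. Since \<prec> is asymmetric, one of (1,2) and
(2,1) is not in \<prec>, and these serve as (a,b).\<close>

lemma arrival_le:
  assumes "\<forall>t\<ge>n. p t = target I i"
  shows "arrival I i p \<le> n"
  unfolding arrival_def using assms by (rule Least_le)

lemma at_target_from_arrival:
  assumes "is_path I i p" and "arrival I i p \<le> t"
  shows "p t = target I i"
proof -
  obtain T where "\<forall>t\<ge>T. p t = target I i" using assms(1) by (auto simp: is_path_def)
  then have "\<forall>t\<ge>arrival I i p. p t = target I i" unfolding arrival_def by (rule LeastI)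
  then show ?thesis using assms(2) by blast
qed

lemma arrival_gt_if_away:
  assumes "is_path I i p" and "p t \<noteq> target I i"
  shows "t < arrival I i p"
  using at_target_from_arrival[OF assms(1)] assms(2) by (meson not_less)

lemma is_path_waiting:
  assumes "start I i = target I i" and "target I i \<in> verts I"
  shows "is_path I i (\<lambda>_. target I i)"
  using assms by (auto simp: is_path_def)

lemma min_arrival_eq_arrival:
  assumes "pp_step I P \<Pi> i"
  shows "min_arrival I P \<Pi> i = arrival I i (\<Pi> i)"
  unfolding min_arrival_def
  by (rule Least_equality) (use assms in \<open>auto simp: pp_step_def\<close>)

lemma pp_steps_consistent:
  assumes "\<forall>i\<in>{1..M}. pp_step I P \<Pi> i"
  shows "consistent I M P \<Pi>"
  using assms min_arrival_eq_arrival by (simp add: consistent_def)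

lemma strict_po_on_wf:
  assumes "strict_po_on M P"
  shows "wf P"
proof -
  have "finite P" using assms finite_subset by (auto simp: strict_po_on_def)
  moreover have "acyclic P"
    using assms by (simp add: strict_po_on_def acyclic_def irrefl_def trancl_id)
  ultimately show ?thesis by (rule finite_acyclic_wf)
qed

text \<open>By well-founded induction along P: waiting at the target has arrival time 0 and meets
none of the higher-priority agents, which already wait at their own, distinct targets.\<close>

lemma pp_steps_waiting_agents_stay:
  assumes "wf P" and "irrefl P"
    and steps: "\<forall>j\<in>S. pp_step I P \<Pi> j"
    and waiting: "\<forall>j\<in>S. start I j = target I j \<and> target I j \<in> verts I"
    and "inj_on (target I) S"
    and closed: "\<forall>j\<in>S. \<forall>k. (k, j) \<in> P \<longrightarrow> k \<in> S"
    and "j \<in> S"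
  shows "\<Pi> j = (\<lambda>_. target I j)"
  using \<open>j \<in> S\<close>
proof (induction j rule: wf_induct[OF \<open>wf P\<close>])
  case (1 j)
  let ?wait = "\<lambda>_. target I j"
  have "\<not> collide ?wait (\<Pi> k)" if "(k, j) \<in> P" for k
  proof -
    have "k \<in> S" "k \<noteq> j" using that closed 1(2) \<open>irrefl P\<close> by (auto simp: irrefl_def)
    then have "target I k \<noteq> target I j" using \<open>inj_on (target I) S\<close> 1(2) by (meson inj_onD)
    moreover have "\<Pi> k = (\<lambda>_. target I k)" using 1(1) that \<open>k \<in> S\<close> by auto
    ultimately show ?thesis by (simp add: collide_def)
  qed
  then have "avoids I P \<Pi> j ?wait"
    using is_path_waiting waiting 1(2) by (auto simp: avoids_def)
  moreover have "arrival I j ?wait = 0" using arrival_le[of 0 ?wait] by simp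
  moreover have "pp_step I P \<Pi> j" using steps 1(2) by blast
  ultimately have "arrival I j (\<Pi> j) = 0" and "is_path I j (\<Pi> j)"
    by (auto simp: pp_step_def avoids_def dest: spec[of _ ?wait])
  then show ?case using at_target_from_arrival by (metis le0)
qed

definition star_edges :: "nat \<Rightarrow> (nat \<times> nat) set" where
  "star_edges n = {(x, y). x \<le> n \<and> y \<le> n \<and> x \<noteq> y \<and> (x = 1 \<or> y = 1)}"

text \<open>Agent a goes from leaf 0 to leaf 2, agent b stays at the centre 1, and every other agent i
stays at leaf i + 3 \<ge> 4, so leaf 3 is free.\<close>

definition blocking_instance :: "nat \<Rightarrow> nat \<Rightarrow> nat \<Rightarrow> mapf" where
  "blocking_instance a b M = \<lparr>verts = {0..M+3}, edges = star_edges (M+3),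
     start = (\<lambda>i. if i = a then 0 else if i = b then 1 else i+3),
     target = (\<lambda>i. if i = a then 2 else if i = b then 1 else i+3)\<rparr>"

definition detour_plan :: "nat \<Rightarrow> nat \<Rightarrow> nat \<Rightarrow> nat \<Rightarrow> nat" where
  "detour_plan a b = (\<lambda>i t. if i = a then (if t = 0 then 0 else if t = 1 then 1 else 2)
     else if i = b then (if t = 1 then 3 else 1) else i+3)"

lemma connected_graph_star_edges:
  assumes "1 \<le> n"
  shows "connected_graph {0..n} (star_edges n)"
  unfolding connected_graph_def
proof (intro conjI ballI)
  fix u v assume "u \<in> {0..n}" "v \<in> {0..n}"
  then have "(u, 1) \<in> (star_edges n)\<^sup>*" "(1, v) \<in> (star_edges n)\<^sup>*"
    using assms by (auto simp: star_edges_def intro: r_into_rtrancl)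
  then show "(u, v) \<in> (star_edges n)\<^sup>*" by simp
qed (auto simp: star_edges_def sym_def irrefl_def)

lemma valid_blocking_instance:
  assumes "a \<noteq> b" and "a \<in> {1..M}" and "b \<in> {1..M}"
  shows "valid_instance (blocking_instance a b M) M"
  using assms connected_graph_star_edges[of "M+3"]
  by (auto simp: valid_instance_def blocking_instance_def inj_on_def)

lemma blocking_instance_path_crosses_centre:
  assumes "a \<noteq> b" and "is_path (blocking_instance a b M) a p"
  shows "\<exists>t. p t = 1"
proof (rule ccontr)
  assume no_centre: "\<not> (\<exists>t. p t = 1)"
  have "p t = 0" for t
  proof (induction t)
    case 0
    then show ?case using assms by (simp add: is_path_def blocking_instance_def)
  next
    case (Suc t)
    then show ?case using assms(2) no_centre
      by (auto simp: is_path_def blocking_instance_def star_edges_def dest: spec[of _ t])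
  qed
  then have "0 = target (blocking_instance a b M) a"
    using at_target_from_arrival[OF assms(2) le_refl] by metis
  then show False by (simp add: blocking_instance_def)
qed

lemma blocking_instance_arrival_gt_1:
  assumes "a \<noteq> b" and "is_path (blocking_instance a b M) a p"
  shows "1 < arrival (blocking_instance a b M) a p"
proof (rule arrival_gt_if_away[OF assms(2)])
  have "p 1 = p 0 \<or> (p 0, p 1) \<in> star_edges (M+3)" and "p 0 = 0"
    using assms(2) by (auto simp: is_path_def blocking_instance_def dest: spec[of _ 0])
  then show "p 1 \<noteq> target (blocking_instance a b M) a"
    by (auto simp: blocking_instance_def star_edges_def)
qed

lemma detour_plan_no_collision:
  assumes "a \<noteq> b" and "0 < i" and "0 < j" and "i \<noteq> j"
  shows "\<not> collide (detour_plan a b i) (detour_plan a b j)"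
  using assms by (auto simp: collide_def detour_plan_def)

lemma detour_plan_solution:
  assumes "a \<noteq> b"
  shows "is_solution (blocking_instance a b M) M (detour_plan a b)"
  using assms detour_plan_no_collision[OF assms]
  by (auto simp: is_solution_def is_path_def blocking_instance_def detour_plan_def
      star_edges_def)

lemma detour_plan_pp_step:
  assumes "a \<noteq> b" and "a \<in> {1..M}" and "i \<in> {1..M}"
  shows "pp_step (blocking_instance a b M) {(a, b)} (detour_plan a b) i"
proof -
  let ?I = "blocking_instance a b M" and ?\<Pi> = "detour_plan a b"
  have path: "is_path ?I i (?\<Pi> i)"
    using detour_plan_solution[OF assms(1)] assms(3) by (simp add: is_solution_def)
  have "avoids ?I {(a, b)} ?\<Pi> i (?\<Pi> i)"
    using path detour_plan_no_collision[OF assms(1)] assms by (auto simp: avoids_def)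
  moreover have "arrival ?I i (?\<Pi> i) \<le> arrival ?I i p" if "avoids ?I {(a, b)} ?\<Pi> i p" for p
  proof -
    consider "i = a" | "i = b" | "i \<noteq> a" "i \<noteq> b" by blast
    then show ?thesis
    proof cases
      case 1
      have "arrival ?I i (?\<Pi> i) \<le> 2"
        by (rule arrival_le) (use 1 in \<open>simp add: detour_plan_def blocking_instance_def\<close>)
      then show ?thesis
        using blocking_instance_arrival_gt_1[OF assms(1)] that 1 by (fastforce simp: avoids_def)
    next
      case 2
      have "arrival ?I i (?\<Pi> i) \<le> 2"
        by (rule arrival_le) (use 2 assms in \<open>simp add: detour_plan_def blocking_instance_def\<close>)
      moreover have "is_path ?I b p" and "\<not> collide p (?\<Pi> a)"
        using that 2 by (auto simp: avoids_def)
      then have "p 1 \<noteq> ?\<Pi> a 1"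
        unfolding collide_def by blast
      then have "p 1 \<noteq> target ?I b"
        using assms(1) by (simp add: detour_plan_def blocking_instance_def)
      ultimately show ?thesis
        using arrival_gt_if_away[OF \<open>is_path ?I b p\<close>] 2 by fastforce
    next
      case 3
      have "arrival ?I i (?\<Pi> i) \<le> 0"
        by (rule arrival_le) (use 3 in \<open>simp add: detour_plan_def blocking_instance_def\<close>)
      then show ?thesis by simp
    qed
  qed
  ultimately show ?thesis by (simp add: pp_step_def)
qed

lemma blocking_instance_P_solvable:
  assumes "a \<noteq> b" and "a \<in> {1..M}" and "b \<in> {1..M}"
  shows "P_solvable (blocking_instance a b M) M"
proof -
  have "strict_po_on M {(a, b)}"
    using assms by (auto simp: strict_po_on_def irrefl_def trans_def)
  moreover have "consistent (blocking_instance a b M) M {(a, b)} (detour_plan a b)"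
    using pp_steps_consistent detour_plan_pp_step[OF assms(1,2)] by blast
  ultimately show ?thesis
    using detour_plan_solution[OF assms(1)] by (auto simp: P_solvable_def)
qed

lemma blocking_instance_pp_fails:
  assumes po: "strict_po_on M P"
    and "a \<noteq> b" and "a \<in> {1..M}" and "b \<in> {1..M}" and "(a, b) \<notin> P"
  shows "\<not> pp_results_in_solution (blocking_instance a b M) M P"
proof
  let ?I = "blocking_instance a b M"
  let ?S = "{j \<in> {1..M}. j \<noteq> a \<and> (a, j) \<notin> P}"
  assume "pp_results_in_solution ?I M P"
  then obtain \<Pi> where steps: "\<forall>j\<in>{1..M}. pp_step ?I P \<Pi> j" and sol: "is_solution ?I M \<Pi>"
    unfolding pp_results_in_solution_def by blast
  have "P \<subseteq> {1..M} \<times> {1..M}" and "irrefl P" and "trans P"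
    using po by (auto simp: strict_po_on_def)
  then have closed: "\<forall>j\<in>?S. \<forall>k. (k, j) \<in> P \<longrightarrow> k \<in> ?S"
    by (auto dest: transD)
  have "\<forall>j\<in>?S. start ?I j = target ?I j \<and> target ?I j \<in> verts ?I"
    and "inj_on (target ?I) ?S"
    by (auto simp: blocking_instance_def inj_on_def)
  then have "\<Pi> b = (\<lambda>_. target ?I b)"
    using pp_steps_waiting_agents_stay[OF strict_po_on_wf[OF po] \<open>irrefl P\<close> _ _ _ closed]
      steps assms by auto
  then have "\<Pi> b t = 1" for t using \<open>a \<noteq> b\<close> by (simp add: blocking_instance_def)
  moreover have "is_path ?I a (\<Pi> a)"
    using steps assms(3) by (simp add: pp_step_def avoids_def)
  then obtain t where "\<Pi> a t = 1"
    using blocking_instance_path_crosses_centre[OF \<open>a \<noteq> b\<close>] by blast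
  ultimately have "collide (\<Pi> a) (\<Pi> b)" unfolding collide_def by metis
  then show False using sol assms by (auto simp: is_solution_def)
qed

theorem theorem2:
  fixes M :: nat and P :: "(nat \<times> nat) set"
  assumes "M \<ge> 2" and "strict_po_on M P"
  shows "\<exists>I. valid_instance I M \<and> P_solvable I M \<and> \<not> pp_results_in_solution I M P"
proof -
  have blocking: "\<exists>I. valid_instance I M \<and> P_solvable I M \<and> \<not> pp_results_in_solution I M P"
    if "a \<noteq> b" "a \<in> {1..M}" "b \<in> {1..M}" "(a, b) \<notin> P" for a b
    using valid_blocking_instance[OF that(1-3)] blocking_instance_P_solvable[OF that(1-3)]
      blocking_instance_pp_fails[OF assms(2) that] by blast
  have "(1, 2) \<notin> P \<or> (2, 1) \<notin> P"
    using assms(2) by (auto simp: strict_po_on_def irrefl_def dest: transD)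
  then show ?thesis using blocking[of 1 2] blocking[of 2 1] assms(1) by auto
qed

end
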